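(* For every integer $n\ge1$, $$|\mathbb H_n^\circ|=n^4-(n-1)^4,\qquad |\mathbb H_n^{i,j}|=\frac{4!}{i!\,j!\,(4-i-j)!}(n-1)^{4-i-j}\quad\text{for all integers } 0<i,j \text{ with } i+j\le4 .$$
   Context: Let $\mathbb Z^4_H=\{\mathbf k\in\mathbb Z^4: k_1+k_2+k_3+k_4=0\}$ and $\mathbb H=\{\mathbf k\in\mathbb Z^4_H: k_1\equiv k_2\equiv k_3\equiv k_4\pmod 4\}$. Let $\mathbb H_n^\circ=\{\mathbf k\in\mathbb H: |k_i-k_l|<4n \text{ for all } i,l\}$. For $0<i,j$ with $i+j\le4$, let $\mathbb H_n^{i,j}$ be the set of $\mathbf k\in\mathbb H$ with $\max_lk_l-\min_lk_l=4n$ such that exactly $i$ coordinates of $\mathbf k$ equal $\max_lk_l$ and exactly $j$ coordinates equal $\min_lk_l$ (equivalently, $\mathbf k/(4n)$ lies on the boundary part $B^{i,j}$ of the rhombic dodecahedron $\{\mathbf t: t_1+\dots+t_4=0,\ |t_i-t_l|\le 1\}$ where exactly $i$ coordinates attain the maximum and $j$ the minimum, the two differing by $1$). *)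

theory Defs
  imports "HOL-Analysis.Analysis"
begin

definition ZH :: "(int^4) set" where
  "ZH = {k. (\<Sum>i\<in>UNIV. k $ i) = 0}"

definition HH :: "(int^4) set" where
  "HH = {k \<in> ZH. \<forall>i l. k $ i mod 4 = k $ l mod 4}"

definition Hcirc :: "nat \<Rightarrow> (int^4) set" where
  "Hcirc n = {k \<in> HH. \<forall>i l. \<bar>k $ i - k $ l\<bar> < 4 * int n}"

definition maxc :: "int^4 \<Rightarrow> int" where
  "maxc k = Max (range (\<lambda>l. k $ l))"

definition minc :: "int^4 \<Rightarrow> int" where
  "minc k = Min (range (\<lambda>l. k $ l))"

definition Hij :: "nat \<Rightarrow> nat \<Rightarrow> nat \<Rightarrow> (int^4) set" where
  "Hij n i j = {k \<in> HH. maxc k - minc k = 4 * int n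
      \<and> card {l. k $ l = maxc k} = i \<and> card {l. k $ l = minc k} = j}"

end

theory Submission
  imports Defs
begin

text \<open>Subtracting the minimal coordinate and dividing by 4 maps H bijectively onto the
  nonnegative integer vectors with a zero coordinate. This divides max - min by 4 and keeps the sets
  of coordinates where the maximum and the minimum are attained. Hence H_n\<degree> corresponds to
  {0..n-1}^4 minus {1..n-1}^4, and H_n^{i,j} to the vectors in {0..n}^4 with exactly i coordinates
  equal to n and j equal to 0: choose these positions, then fill the remaining 4-i-j coordinates
  from {1..n-1}.\<close>

lemma card_vec_box:
  fixes A :: "'n::finite \<Rightarrow> 'a set"
  shows "card {x::'a^'n. \<forall>i. x$i \<in> A i} = (\<Prod>i\<in>UNIV. card (A i))"
proof -
  have "bij_betw vec_nth {x::'a^'n. \<forall>i. x$i \<in> A i} (PiE UNIV A)"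
    by (rule bij_betw_byWitness[where f'=vec_lambda]) (auto simp: fun_eq_iff)
  then show ?thesis
    by (simp add: bij_betw_same_card card_PiE)
qed

lemma finite_vec_box:
  fixes A :: "'n::finite \<Rightarrow> 'a set"
  assumes "\<And>i. finite (A i)"
  shows "finite {x::'a^'n. \<forall>i. x$i \<in> A i}"
proof (rule finite_subset)
  show "{x::'a^'n. \<forall>i. x$i \<in> A i} \<subseteq> vec_lambda ` PiE UNIV A"
    by (auto intro: image_eqI[where x = "vec_nth _"])
  show "finite (vec_lambda ` PiE UNIV A)"
    using assms by (simp add: finite_PiE)
qed

lemma card_Compl_finite:
  "card (- (A :: 'a::finite set)) = CARD('a) - card A"
  by (metis Compl_eq_Diff_UNIV card_Diff_subset finite subset_UNIV)

lemma card_restrict_bij_betw: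
  assumes "bij_betw f A B"
  shows "card {a\<in>A. P (f a)} = card {b\<in>B. P b}"
proof -
  have "f ` {a\<in>A. P (f a)} = {b\<in>B. P b}"
    using assms by (auto simp: bij_betw_def)
  then have "bij_betw f {a\<in>A. P (f a)} {b\<in>B. P b}"
    using assms by (rule bij_betw_subset[rotated 2]) auto
  then show ?thesis
    by (rule bij_betw_same_card)
qed

lemma fact_mult_binomial_binomial:
  assumes "i + j \<le> N"
  shows "fact i * fact j * fact (N - i - j) * (N choose i) * ((N - i) choose j) = (fact N :: nat)"
proof -
  have "fact j * fact (N - i - j) * ((N - i) choose j) = (fact (N - i) :: nat)"
    using binomial_fact_lemma[of j "N - i"] assms by (simp add: diff_diff_add add.commute)
  then have "fact i * fact j * fact (N - i - j) * (N choose i) * ((N - i) choose j)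
      = fact i * fact (N - i) * (N choose i)"
    by (simp add: ac_simps)
  also have "\<dots> = fact N"
    using assms by (intro binomial_fact_lemma) simp
  finally show ?thesis .
qed

lemma minc_le: "minc k \<le> k$l"
  unfolding minc_def by simp

lemma maxc_ge: "k$l \<le> maxc k"
  unfolding maxc_def by simp

lemma minc_attained: "\<exists>l. k$l = minc k"
  unfolding minc_def by (metis Min_in UNIV_not_empty finite finite_imageI image_is_empty imageE)

lemma maxc_attained: "\<exists>l. k$l = maxc k"
  unfolding maxc_def by (metis Max_in UNIV_not_empty finite finite_imageI image_is_empty imageE)

lemma minc_ge_iff: "c \<le> minc k \<longleftrightarrow> (\<forall>l. c \<le> k$l)"
  unfolding minc_def by simp

lemma maxc_less_iff: "maxc k < c \<longleftrightarrow> (\<forall>l. k$l < c)"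
  unfolding maxc_def by simp

lemma minc_mono_map: "mono f \<Longrightarrow> minc (\<chi> l. f (k$l)) = f (minc k)"
  unfolding minc_def by (simp add: mono_Min_commute image_image)

lemma maxc_mono_map: "mono f \<Longrightarrow> maxc (\<chi> l. f (k$l)) = f (maxc k)"
  unfolding maxc_def by (simp add: mono_Max_commute image_image)

lemma all_coordinate_diffs_less_iff:
  "(\<forall>i l. \<bar>k$i - k$l\<bar> < d) \<longleftrightarrow> maxc k - minc k < d"
proof
  assume diffs: "\<forall>i l. \<bar>k$i - k$l\<bar> < d"
  obtain i l where "k$i = maxc k" "k$l = minc k"
    using maxc_attained minc_attained by metis
  then show "maxc k - minc k < d"
    using diffs[rule_format, of i l] by linarith
next
  assume width: "maxc k - minc k < d"
  have "\<bar>k$i - k$l\<bar> \<le> maxc k - minc k" for i l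
    using maxc_ge[of k i] maxc_ge[of k l] minc_le[of k i] minc_le[of k l] by (simp add: abs_le_iff)
  then show "\<forall>i l. \<bar>k$i - k$l\<bar> < d"
    using width by (meson le_less_trans)
qed

definition normalize_HH :: "int^4 \<Rightarrow> int^4" where
  "normalize_HH k = (\<chi> l. (k$l - minc k) div 4)"

text \<open>The inverse of normalize_HH: as the coordinates of \<open>k\<close> sum to \<open>0\<close>, the shift
  \<open>minc k\<close> is recovered from the normalized vector \<open>m\<close> as \<open>-\<Sum>m\<close>.\<close>

definition unnormalize_HH :: "int^4 \<Rightarrow> int^4" where
  "unnormalize_HH m = (\<chi> l. 4 * m$l - (\<Sum>i\<in>UNIV. m$i))"

lemma HH_eq_normalize_HH:
  assumes "k \<in> HH"
  shows "k = (\<chi> l. 4 * normalize_HH k $ l + minc k)"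
proof -
  obtain l0 where "k$l0 = minc k"
    using minc_attained by blast
  then have "4 dvd k$l - minc k" for l
    using assms unfolding HH_def by (metis (mono_tags, lifting) mem_Collect_eq mod_eq_dvd_iff)
  then show ?thesis
    by (simp add: vec_eq_iff normalize_HH_def)
qed

lemma minc_affine: "minc (\<chi> l. 4 * m$l + c) = 4 * minc m + c"
  by (rule minc_mono_map) (auto intro: monoI)

lemma maxc_affine: "maxc (\<chi> l. 4 * m$l + c) = 4 * maxc m + c"
  by (rule maxc_mono_map) (auto intro: monoI)

lemma minc_normalize_HH:
  assumes "k \<in> HH"
  shows "minc (normalize_HH k) = 0"
  using minc_affine[of "normalize_HH k" "minc k"] by (simp flip: HH_eq_normalize_HH[OF assms])

lemma maxc_minus_minc_normalize_HH:
  assumes "k \<in> HH"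
  shows "maxc k - minc k = 4 * maxc (normalize_HH k)"
  using maxc_affine[of "normalize_HH k" "minc k"] by (simp flip: HH_eq_normalize_HH[OF assms])

lemma levels_normalize_HH:
  assumes "k \<in> HH"
  shows "{l. k$l = maxc k} = {l. normalize_HH k $ l = maxc (normalize_HH k)}"
    and "{l. k$l = minc k} = {l. normalize_HH k $ l = 0}"
proof -
  have "k$l = 4 * normalize_HH k $ l + minc k" for l
    using HH_eq_normalize_HH[OF assms] by (metis vec_lambda_beta)
  then show "{l. k$l = maxc k} = {l. normalize_HH k $ l = maxc (normalize_HH k)}"
    and "{l. k$l = minc k} = {l. normalize_HH k $ l = 0}"
    using maxc_minus_minc_normalize_HH[OF assms] by auto
qed

lemma unnormalize_HH_in_HH: "unnormalize_HH m \<in> HH"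
  by (auto simp: HH_def ZH_def unnormalize_HH_def sum_subtractf mod_eq_dvd_iff
      simp flip: sum_distrib_left)

lemma unnormalize_HH_normalize_HH:
  assumes "k \<in> HH"
  shows "unnormalize_HH (normalize_HH k) = k"
proof -
  have "(\<Sum>i\<in>UNIV. k$i) = 0"
    using assms by (simp add: HH_def ZH_def)
  then have "4 * (\<Sum>i\<in>UNIV. normalize_HH k $ i) + 4 * minc k = 0"
    by (subst (asm) HH_eq_normalize_HH[OF assms]) (simp add: sum.distrib sum_distrib_left)
  then have "(\<Sum>i\<in>UNIV. normalize_HH k $ i) = - minc k"
    by linarith
  then show ?thesis
    by (subst (2) HH_eq_normalize_HH[OF assms]) (simp add: unnormalize_HH_def)
qed

lemma normalize_HH_unnormalize_HH:
  assumes "minc m = 0"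
  shows "normalize_HH (unnormalize_HH m) = m"
proof -
  have "unnormalize_HH m = (\<chi> l. 4 * m$l + - (\<Sum>i\<in>UNIV. m$i))"
    by (simp add: unnormalize_HH_def)
  then have "minc (unnormalize_HH m) = - (\<Sum>i\<in>UNIV. m$i)"
    using assms minc_affine[of m "- (\<Sum>i\<in>UNIV. m$i)"] by simp
  then show ?thesis
    by (simp add: normalize_HH_def unnormalize_HH_def vec_eq_iff)
qed

lemma bij_betw_normalize_HH: "bij_betw normalize_HH HH {m. minc m = 0}"
  by (rule bij_betw_byWitness[where f' = unnormalize_HH])
    (auto simp: unnormalize_HH_normalize_HH normalize_HH_unnormalize_HH minc_normalize_HH unnormalize_HH_in_HH)

lemma Hcirc_eq_normalize_HH: "Hcirc n = {k \<in> HH. maxc (normalize_HH k) < int n}"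
  unfolding Hcirc_def all_coordinate_diffs_less_iff by (auto simp: maxc_minus_minc_normalize_HH)

lemma Hij_eq_normalize_HH:
  "Hij n i j = {k \<in> HH. maxc (normalize_HH k) = int n
      \<and> card {l. normalize_HH k $ l = maxc (normalize_HH k)} = i
      \<and> card {l. normalize_HH k $ l = 0} = j}"
  unfolding Hij_def by (auto simp: maxc_minus_minc_normalize_HH levels_normalize_HH)

lemma card_minc_zero_maxc_less:
  assumes "n \<ge> 1"
  shows "card {m. minc m = 0 \<and> maxc m < int n} = n ^ 4 - (n - 1) ^ 4"
proof -
  let ?box = "\<lambda>a. {m::int^4. \<forall>l. m$l \<in> {a..int n - 1}}"
  have "minc m = 0 \<longleftrightarrow> 0 \<le> minc m \<and> \<not> 1 \<le> minc m" for m
    by linarith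
  then have "{m. minc m = 0 \<and> maxc m < int n} = ?box 0 - ?box 1"
    by (auto simp: minc_ge_iff maxc_less_iff)
  also have "card \<dots> = card (?box 0) - card (?box 1)"
    by (intro card_Diff_subset finite_vec_box) (auto, meson order.trans zero_le_one)
  also have "\<dots> = n ^ 4 - (n - 1) ^ 4"
    unfolding card_vec_box using assms by (simp add: nat_diff_distrib)
  finally show ?thesis .
qed

definition level_vecs :: "nat \<Rightarrow> 'n::finite set \<Rightarrow> 'n set \<Rightarrow> (int^'n) set" where
  "level_vecs n I J = {m. (\<forall>l. m$l \<in> {0..int n}) \<and> {l. m$l = int n} = I \<and> {l. m$l = 0} = J}"

lemma finite_level_vecs: "finite (level_vecs n I J)"
proof (rule finite_subset)
  show "level_vecs n I J \<subseteq> {m. \<forall>l. m$l \<in> {0..int n}}"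
    by (auto simp: level_vecs_def)
qed (rule finite_vec_box, simp)

lemma card_level_vecs:
  fixes I J :: "'n::finite set"
  assumes "n \<ge> 1" and "I \<inter> J = {}"
  shows "card (level_vecs n I J) = (n - 1) ^ (CARD('n) - card I - card J)"
proof -
  define A where "A l = (if l \<in> I then {int n} else if l \<in> J then {0} else {1..int n - 1})" for l
  have coordinate: "x \<in> A l \<longleftrightarrow> x \<in> {0..int n} \<and> (x = int n \<longleftrightarrow> l \<in> I) \<and> (x = 0 \<longleftrightarrow> l \<in> J)" for x l
    using assms by (auto simp: A_def)
  have "level_vecs n I J = {m. \<forall>l. m$l \<in> A l}"
    unfolding level_vecs_def coordinate by (auto simp: set_eq_iff)
  then have "card (level_vecs n I J) = (\<Prod>l\<in>UNIV. card (A l))"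
    by (simp add: card_vec_box)
  also have "\<dots> = (\<Prod>l\<in>UNIV. if l \<in> I \<union> J then 1 else n - 1)"
    using assms(1) by (intro prod.cong refl) (simp add: A_def nat_diff_distrib)
  also have "\<dots> = (\<Prod>l\<in>- (I \<union> J). n - 1)"
    by (simp add: prod.If_cases Int_absorb1 Collect_disj_eq flip: Compl_eq_Diff_UNIV)
  also have "\<dots> = (n - 1) ^ (CARD('n) - card I - card J)"
    using assms(2) by (simp only: prod_constant card_Compl_finite card_Un_disjoint finite diff_diff_left)
  finally show ?thesis .
qed

lemma card_disjoint_subset_pairs:
  "card (SIGMA I:{I::'n::finite set. card I = i}. {J. J \<subseteq> - I \<and> card J = j})
     = (CARD('n) choose i) * ((CARD('n) - i) choose j)"
proof -
  have "card (SIGMA I:{I::'n set. card I = i}. {J. J \<subseteq> - I \<and> card J = j})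
      = (\<Sum>I\<in>{I::'n set. card I = i}. card {J. J \<subseteq> - I \<and> card J = j})"
    by (rule card_SigmaI) auto
  also have "\<dots> = (\<Sum>I\<in>{I::'n set. card I = i}. (CARD('n) - i) choose j)"
    by (intro sum.cong refl) (simp add: n_subsets card_Compl_finite)
  also have "\<dots> = (CARD('n) choose i) * ((CARD('n) - i) choose j)"
    using n_subsets[of "UNIV :: 'n set" i] by simp
  finally show ?thesis .
qed

lemma card_bounded_vecs_with_level_counts:
  assumes "n \<ge> 1"
  shows "card {m::int^'n::finite. (\<forall>l. m$l \<in> {0..int n})
              \<and> card {l. m$l = int n} = i \<and> card {l. m$l = 0} = j}
         = (CARD('n) choose i) * ((CARD('n) - i) choose j) * (n - 1) ^ (CARD('n) - i - j)"
proof -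
  define P where "P = (SIGMA I:{I::'n set. card I = i}. {J. J \<subseteq> - I \<and> card J = j})"
  have "{m::int^'n. (\<forall>l. m$l \<in> {0..int n}) \<and> card {l. m$l = int n} = i \<and> card {l. m$l = 0} = j}
      = (\<Union>p\<in>P. level_vecs n (fst p) (snd p))"
  proof (intro set_eqI iffI)
    fix m :: "int^'n"
    assume "m \<in> {m. (\<forall>l. m$l \<in> {0..int n}) \<and> card {l. m$l = int n} = i \<and> card {l. m$l = 0} = j}"
    then show "m \<in> (\<Union>p\<in>P. level_vecs n (fst p) (snd p))"
      using assms by (intro UN_I[of "({l. m$l = int n}, {l. m$l = 0})"]) (auto simp: P_def level_vecs_def)
  qed (auto simp: P_def level_vecs_def)
  also have "card \<dots> = (\<Sum>p\<in>P. card (level_vecs n (fst p) (snd p)))"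
  proof (rule card_UN_disjoint)
    show "\<forall>p\<in>P. \<forall>q\<in>P. p \<noteq> q \<longrightarrow> level_vecs n (fst p) (snd p) \<inter> level_vecs n (fst q) (snd q) = {}"
      by (auto simp: level_vecs_def prod_eq_iff)
  qed (simp_all add: finite_level_vecs)
  also have "\<dots> = (\<Sum>p\<in>P. (n - 1) ^ (CARD('n) - i - j))"
  proof (rule sum.cong)
    fix p assume "p \<in> P"
    then have "fst p \<inter> snd p = {}" "card (fst p) = i" "card (snd p) = j"
      by (auto simp: P_def)
    then show "card (level_vecs n (fst p) (snd p)) = (n - 1) ^ (CARD('n) - i - j)"
      using assms by (simp add: card_level_vecs)
  qed simp
  also have "\<dots> = (CARD('n) choose i) * ((CARD('n) - i) choose j) * (n - 1) ^ (CARD('n) - i - j)"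
    by (simp add: P_def card_disjoint_subset_pairs)
  finally show ?thesis .
qed

lemma card_minc_zero_maxc_eq:
  assumes "n \<ge> 1" "i > 0" "j > 0"
  shows "card {m. minc m = 0 \<and> maxc m = int n \<and> card {l. m$l = maxc m} = i \<and> card {l. m$l = 0} = j}
       = (4 choose i) * ((4 - i) choose j) * (n - 1) ^ (4 - i - j)"
proof -
  have extrema: "minc m = 0 \<and> maxc m = int n"
    if "\<forall>l. m$l \<in> {0..int n}" "card {l. m$l = int n} = i" "card {l. m$l = 0} = j" for m
  proof -
    have "{l. m$l = 0} \<noteq> {}" "{l. m$l = int n} \<noteq> {}"
      using that(2,3) assms(2,3) by (metis card.empty less_irrefl)+
    then obtain l0 l1 where "m$l0 = 0" "m$l1 = int n"
      by blast
    then show ?thesis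
      using that(1) minc_le[of m l0] maxc_ge[of m l1] minc_ge_iff[of 0 m] maxc_less_iff[of m "int n + 1"]
      by auto
  qed
  have bounds: "\<forall>l. m$l \<in> {0..int n}" if "minc m = 0" "maxc m = int n" for m
    using that minc_le[of m] maxc_ge[of m] by auto
  have "{m. minc m = 0 \<and> maxc m = int n \<and> card {l. m$l = maxc m} = i \<and> card {l. m$l = 0} = j}
      = {m::int^4. (\<forall>l. m$l \<in> {0..int n}) \<and> card {l. m$l = int n} = i \<and> card {l. m$l = 0} = j}"
  proof (intro set_eqI iffI)
    fix m :: "int^4"
    assume "m \<in> {m. (\<forall>l. m$l \<in> {0..int n}) \<and> card {l. m$l = int n} = i \<and> card {l. m$l = 0} = j}"
    then show "m \<in> {m. minc m = 0 \<and> maxc m = int n \<and> card {l. m$l = maxc m} = i \<and> card {l. m$l = 0} = j}"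
      using extrema by auto
  qed (use bounds in auto)
  then show ?thesis
    using card_bounded_vecs_with_level_counts[OF assms(1), where 'n = 4] by simp
qed

theorem lemma3p13:
  fixes n :: nat
  assumes "n \<ge> 1"
  shows "card (Hcirc n) = n ^ 4 - (n - 1) ^ 4 \<and>
    (\<forall>i j::nat. 0 < i \<and> 0 < j \<and> i + j \<le> 4 \<longrightarrow>
       real (card (Hij n i j)) =
         fact 4 / (fact i * fact j * fact (4 - i - j)) * real (n - 1) ^ (4 - i - j))"
proof (intro conjI allI impI)
  show "card (Hcirc n) = n ^ 4 - (n - 1) ^ 4"
    using card_restrict_bij_betw[OF bij_betw_normalize_HH, of "\<lambda>m. maxc m < int n"]
      card_minc_zero_maxc_less[OF assms]
    by (simp add: Hcirc_eq_normalize_HH)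
  fix i j :: nat
  assume ij: "0 < i \<and> 0 < j \<and> i + j \<le> 4"
  have "card (Hij n i j) = (4 choose i) * ((4 - i) choose j) * (n - 1) ^ (4 - i - j)"
    using card_restrict_bij_betw[OF bij_betw_normalize_HH,
        of "\<lambda>m. maxc m = int n \<and> card {l. m$l = maxc m} = i \<and> card {l. m$l = 0} = j"]
      card_minc_zero_maxc_eq[OF assms] ij
    by (simp add: Hij_eq_normalize_HH)
  moreover have "real ((4 choose i) * ((4 - i) choose j)) = fact 4 / (fact i * fact j * fact (4 - i - j))"
    using arg_cong[OF fact_mult_binomial_binomial[of i j 4], of real] ij
    by (simp add: field_simps)
  ultimately show "real (card (Hij n i j)) =
      fact 4 / (fact i * fact j * fact (4 - i - j)) * real (n - 1) ^ (4 - i - j)"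
    by simp
qed

end
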